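(* Let $m\ge 2$, let $D_m=\langle r,s\mid r^m=e,\ s^2=e,\ srs=r^{-1}\rangle$, let $\mathcal I=\{sr^k: 0\le k<m\}$ be its set of reflections, and let $H$ be an abelian group. (I) If $m$ is odd, then $D_m=\langle\mathcal I\rangle$ and for every $a,b\in\mathcal I$ there exists $t\in D_m$ with $t^2=ab$; consequently $S_1(D_m,H)=S_{1,2}(D_m,H)=\mathrm{Hom}(D_m,H)$. (II) If $m$ is even, this square-root property may fail: for example, in $D_4$ the product $s\cdot(sr)=r$ of two reflections is not a square in $D_4$.
   Context: $H$ is written additively. For a group $G$ with identity $e$, $S_1(G,H)$ is the set of $f:G\to H$ with $f(e)=0$ and $f(xy)+f(xy^{-1})=2f(x)$ for all $x,y\in G$; $S_{1,2}(G,H)$ is the subset of those also satisfying $f(xy)+f(x^{-1}y)=2f(y)$ for all $x,y\in G$. *)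

theory Defs
  imports "HOL-Algebra.Algebra"
begin

text \<open>Concrete model of the dihedral group D_m of order 2m: the pair (a,k) stands
for s^a r^k (a :: bool, 0 \<le> k < m).  Using r^j s = s r^(-j):
 (s^a r^j)(s^b r^k) = s^(a xor b) r^((if b then -j else j) + k).\<close>
definition dihedral :: "nat \<Rightarrow> (bool \<times> int) monoid" where
  "dihedral m = \<lparr> carrier = UNIV \<times> {0..<int m},
     monoid.mult = (\<lambda>(a, j) (b, k). (a \<noteq> b, ((if b then - j else j) + k) mod int m)),
     monoid.one = (False, 0) \<rparr>"

definition rot :: "nat \<Rightarrow> bool \<times> int" where
  "rot m = (False, 1 mod int m)"

definition refl0 :: "bool \<times> int" where
  "refl0 = (True, 0)"

definition reflections :: "nat \<Rightarrow> (bool \<times> int) set" where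
  "reflections m = {refl0 \<otimes>\<^bsub>dihedral m\<^esub> (rot m [^]\<^bsub>dihedral m\<^esub> k) | k. k < m}"

definition S1 :: "('a, 'b) monoid_scheme \<Rightarrow> ('a \<Rightarrow> 'h::ab_group_add) set" where
  "S1 G = {f. f \<one>\<^bsub>G\<^esub> = 0 \<and>
     (\<forall>x\<in>carrier G. \<forall>y\<in>carrier G.
        f (x \<otimes>\<^bsub>G\<^esub> y) + f (x \<otimes>\<^bsub>G\<^esub> inv\<^bsub>G\<^esub> y) = f x + f x)}"

definition S12 :: "('a, 'b) monoid_scheme \<Rightarrow> ('a \<Rightarrow> 'h::ab_group_add) set" where
  "S12 G = {f. f \<in> S1 G \<and>
     (\<forall>x\<in>carrier G. \<forall>y\<in>carrier G.
        f (x \<otimes>\<^bsub>G\<^esub> y) + f (inv\<^bsub>G\<^esub> x \<otimes>\<^bsub>G\<^esub> y) = f y + f y)}"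

definition Hom_add :: "('a, 'b) monoid_scheme \<Rightarrow> ('a \<Rightarrow> 'h::ab_group_add) set" where
  "Hom_add G = {f. \<forall>x\<in>carrier G. \<forall>y\<in>carrier G. f (x \<otimes>\<^bsub>G\<^esub> y) = f x + f y}"

end

theory Submission
  imports Defs
begin

(* For odd m, doubling is invertible modulo m, so every rotation r^k is the square of a rotation;
   this also gives the square root of s r^i s r^j = r^(j-i).  For f in S1 the equation with y = x
   gives f(x^2) = 2 f(x); hence 2 f vanishes on involutions, i.e. on reflections, and then (taking
   y = s) also on rotations.  So f vanishes on all squares, i.e. on the rotations, and the equation
   with x = s r^k, y = r^k makes f constant on the reflections: f factors through D_m / <r>.
   In D_4 the only squares are e and r^2. *)

lemma S12_subset_S1: "S12 G \<subseteq> S1 G"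
  by (auto simp: S12_def)

lemma Hom_add_subset_S12:
  assumes "group G"
  shows "Hom_add G \<subseteq> S12 G"
proof
  fix f assume "f \<in> Hom_add G"
  then have hom: "\<And>x y. x \<in> carrier G \<Longrightarrow> y \<in> carrier G \<Longrightarrow> f (x \<otimes>\<^bsub>G\<^esub> y) = f x + f y"
    by (auto simp: Hom_add_def)
  have f_one: "f \<one>\<^bsub>G\<^esub> = 0"
    using hom[of "\<one>\<^bsub>G\<^esub>" "\<one>\<^bsub>G\<^esub>"] assms by (simp add: group.is_monoid monoid.one_closed)
  have f_inv: "f (inv\<^bsub>G\<^esub> y) = - f y" if "y \<in> carrier G" for y
    using hom[of y "inv\<^bsub>G\<^esub> y"] that f_one assms
    by (simp add: group.inv_closed group.r_inv eq_neg_iff_add_eq_0 add.commute)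
  show "f \<in> S12 G"
    unfolding S12_def S1_def using f_one hom f_inv assms by (auto simp: group.inv_closed)
qed

lemma S1_square:
  assumes "group G" "f \<in> S1 G" "x \<in> carrier G"
  shows "f (x \<otimes>\<^bsub>G\<^esub> x) = f x + f x"
proof -
  have "f (x \<otimes>\<^bsub>G\<^esub> x) + f (x \<otimes>\<^bsub>G\<^esub> inv\<^bsub>G\<^esub> x) = f x + f x"
    using assms(2,3) by (auto simp: S1_def)
  then show ?thesis
    using assms by (simp add: S1_def group.r_inv)
qed

lemma S1_involution:
  assumes "group G" "f \<in> S1 G" "x \<in> carrier G" "x \<otimes>\<^bsub>G\<^esub> x = \<one>\<^bsub>G\<^esub>"
  shows "f x + f x = 0"
  using S1_square[OF assms(1-3)] assms(2,4) by (simp add: S1_def)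

lemma S1_double_eq_zero_of_involutions:
  assumes G: "group G" and f: "f \<in> S1 G" and x: "x \<in> carrier G" and a: "a \<in> carrier G"
    and "a \<otimes>\<^bsub>G\<^esub> a = \<one>\<^bsub>G\<^esub>" and xa: "(x \<otimes>\<^bsub>G\<^esub> a) \<otimes>\<^bsub>G\<^esub> (x \<otimes>\<^bsub>G\<^esub> a) = \<one>\<^bsub>G\<^esub>"
  shows "f x + f x = 0"
proof -
  have "f (x \<otimes>\<^bsub>G\<^esub> a) + f (x \<otimes>\<^bsub>G\<^esub> inv\<^bsub>G\<^esub> a) = f x + f x"
    using f x a by (simp add: S1_def)
  moreover have "inv\<^bsub>G\<^esub> a = a"
    using assms by (simp add: group.inv_equality)
  moreover have "f (x \<otimes>\<^bsub>G\<^esub> a) + f (x \<otimes>\<^bsub>G\<^esub> a) = 0"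
    using S1_involution[OF G f _ xa] x a G by (simp add: group.is_monoid monoid.m_closed)
  ultimately show ?thesis by simp
qed

lemma dihedral_mult [simp]:
  "(a, j) \<otimes>\<^bsub>dihedral m\<^esub> (b, k) = (a \<noteq> b, ((if b then - j else j) + k) mod int m)"
  by (simp add: dihedral_def)

lemma carrier_dihedral: "carrier (dihedral m) = UNIV \<times> {0..<int m}"
  by (simp add: dihedral_def)

lemma one_dihedral [simp]: "\<one>\<^bsub>dihedral m\<^esub> = (False, 0)"
  by (simp add: dihedral_def)

lemma group_dihedral:
  assumes "0 < m"
  shows "group (dihedral m)"
proof (rule groupI)
  fix x y assume "x \<in> carrier (dihedral m)" "y \<in> carrier (dihedral m)"
  then show "x \<otimes>\<^bsub>dihedral m\<^esub> y \<in> carrier (dihedral m)"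
    using assms by (cases x; cases y) (simp add: carrier_dihedral)
next
  show "\<one>\<^bsub>dihedral m\<^esub> \<in> carrier (dihedral m)"
    using assms by (simp add: carrier_dihedral)
next
  fix x y z
  show "x \<otimes>\<^bsub>dihedral m\<^esub> y \<otimes>\<^bsub>dihedral m\<^esub> z = x \<otimes>\<^bsub>dihedral m\<^esub> (y \<otimes>\<^bsub>dihedral m\<^esub> z)"
    by (cases x; cases y; cases z) (auto simp: mod_simps algebra_simps)
next
  fix x assume "x \<in> carrier (dihedral m)"
  then show "\<one>\<^bsub>dihedral m\<^esub> \<otimes>\<^bsub>dihedral m\<^esub> x = x"
    by (cases x) (auto simp: carrier_dihedral)
next
  fix x assume x: "x \<in> carrier (dihedral m)"
  obtain a i where x_eq: "x = (a, i)" by (cases x)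
  show "\<exists>y\<in>carrier (dihedral m). y \<otimes>\<^bsub>dihedral m\<^esub> x = \<one>\<^bsub>dihedral m\<^esub>"
  proof
    show "(if a then (a, i) else (False, - i mod int m)) \<otimes>\<^bsub>dihedral m\<^esub> x = \<one>\<^bsub>dihedral m\<^esub>"
      using x by (auto simp: x_eq carrier_dihedral mod_simps)
  qed (use x assms in \<open>auto simp: x_eq carrier_dihedral\<close>)
qed

lemma inv_dihedral:
  assumes "0 < m" "0 \<le> i" "i < int m"
  shows "inv\<^bsub>dihedral m\<^esub> (a, i) = (if a then (a, i) else (False, - i mod int m))"
  by (rule group.inv_equality[OF group_dihedral[OF assms(1)]])
    (use assms in \<open>auto simp: carrier_dihedral mod_simps\<close>)

lemma rot_pow_dihedral: "rot m [^]\<^bsub>dihedral m\<^esub> (k::nat) = (False, int k mod int m)"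
  by (induction k) (auto simp: rot_def mod_simps add.commute)

lemma reflections_eq: "reflections m = {True} \<times> {0..<int m}"
proof -
  have refl_pow: "refl0 \<otimes>\<^bsub>dihedral m\<^esub> (rot m [^]\<^bsub>dihedral m\<^esub> k) = (True, int k mod int m)" for k
    by (simp add: rot_pow_dihedral refl0_def)
  show ?thesis
  proof (intro Set.set_eqI iffI)
    fix x assume "x \<in> reflections m"
    then show "x \<in> {True} \<times> {0..<int m}"
      unfolding reflections_def refl_pow by auto
  next
    fix x assume "x \<in> {True} \<times> {0..<int m}"
    then obtain i where "x = (True, i)" "0 \<le> i" "i < int m"
      by auto
    then have "x = (True, int (nat i) mod int m)" "nat i < m"
      by auto
    then show "x \<in> reflections m"
      unfolding reflections_def refl_pow by blast
  qed
qed

lemma generate_reflections_dihedral: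
  assumes "0 < m"
  shows "generate (dihedral m) (reflections m) = carrier (dihedral m)"
proof
  show "generate (dihedral m) (reflections m) \<subseteq> carrier (dihedral m)"
    by (rule group.generate_incl[OF group_dihedral[OF assms]])
      (auto simp: reflections_eq carrier_dihedral)
next
  show "carrier (dihedral m) \<subseteq> generate (dihedral m) (reflections m)"
  proof
    fix x assume "x \<in> carrier (dihedral m)"
    then obtain a i where x_eq: "x = (a, i)" and i: "0 \<le> i" "i < int m"
      by (auto simp: carrier_dihedral)
    have s: "(True, 0) \<in> generate (dihedral m) (reflections m)"
      and sr: "(True, i) \<in> generate (dihedral m) (reflections m)"
      using i assms by (auto intro: generate.incl simp: reflections_eq)
    show "x \<in> generate (dihedral m) (reflections m)"
    proof (cases a)
      case True
      with sr x_eq show ?thesis by simp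
    next
      case False
      then have "x = (True, 0) \<otimes>\<^bsub>dihedral m\<^esub> (True, i)"
        using i x_eq by simp
      with s sr show ?thesis by (metis generate.eng)
    qed
  qed
qed

lemma odd_mod_halve:
  fixes n i :: int
  assumes "odd n" "0 < n"
  shows "\<exists>k\<in>{0..<n}. (2 * k) mod n = i mod n"
proof -
  obtain t where n_eq: "n = 2 * t + 1"
    using assms(1) oddE by blast
  define k where "k = (i * (t + 1)) mod n"
  have "(2 * k) mod n = (2 * (i * (t + 1))) mod n"
    unfolding k_def mod_mult_right_eq ..
  also have "2 * (i * (t + 1)) = i + n * i"
    by (simp add: n_eq algebra_simps)
  finally have "(2 * k) mod n = i mod n"
    by simp
  moreover have "k \<in> {0..<n}"
    using assms(2) by (simp add: k_def)
  ultimately show ?thesis by blast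
qed

lemma reflection_products_are_squares:
  assumes "odd m" "a \<in> reflections m" "b \<in> reflections m"
  shows "\<exists>t\<in>carrier (dihedral m). t \<otimes>\<^bsub>dihedral m\<^esub> t = a \<otimes>\<^bsub>dihedral m\<^esub> b"
proof -
  obtain i j where ab: "a = (True, i)" "b = (True, j)"
    using assms by (auto simp: reflections_eq)
  have "0 < m"
    using odd_pos[OF assms(1)] .
  then obtain k where "k \<in> {0..<int m}" "(2 * k) mod int m = (j - i) mod int m"
    using odd_mod_halve[of "int m" "j - i"] assms(1) by auto
  then have "(False, k) \<in> carrier (dihedral m)"
    and "(False, k) \<otimes>\<^bsub>dihedral m\<^esub> (False, k) = a \<otimes>\<^bsub>dihedral m\<^esub> b"
    by (auto simp: carrier_dihedral ab)
  then show ?thesis by blast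
qed

lemma S1_dihedral_double_eq_zero:
  assumes m: "0 < m" and f: "f \<in> S1 (dihedral m)" and x: "x \<in> carrier (dihedral m)"
  shows "f x + f x = 0"
proof -
  have G: "group (dihedral m)"
    using group_dihedral[OF m] .
  obtain a i where x_eq: "x = (a, i)"
    by (cases x)
  show ?thesis
  proof (cases a)
    case True
    then show ?thesis
      using S1_involution[OF G f x] by (simp add: x_eq)
  next
    case False
    then show ?thesis
      using S1_double_eq_zero_of_involutions[OF G f x, of "(True, 0)"] m
      by (simp add: x_eq carrier_dihedral)
  qed
qed

lemma S1_dihedral_rotation:
  assumes "odd m" and f: "f \<in> S1 (dihedral m)" and "0 \<le> i" "i < int m"
  shows "f (False, i) = 0"
proof -
  have m: "0 < m"
    using odd_pos[OF assms(1)] .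
  obtain k where k: "k \<in> {0..<int m}" "(2 * k) mod int m = i"
    using odd_mod_halve[of "int m" i] assms m by auto
  then have t: "(False, k) \<in> carrier (dihedral m)"
    by (simp add: carrier_dihedral)
  have "f (False, i) = f ((False, k) \<otimes>\<^bsub>dihedral m\<^esub> (False, k))"
    using k by simp
  also have "\<dots> = 0"
    using S1_square[OF group_dihedral[OF m] f t] S1_dihedral_double_eq_zero[OF m f t] by simp
  finally show ?thesis .
qed

lemma S1_dihedral_reflection:
  assumes "odd m" and f: "f \<in> S1 (dihedral m)" and "0 \<le> i" "i < int m"
  shows "f (True, i) = f (True, 0)"
proof -
  have m: "0 < m"
    using odd_pos[OF assms(1)] .
  obtain k where k: "k \<in> {0..<int m}" "(2 * k) mod int m = i"
    using odd_mod_halve[of "int m" i] assms m by auto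
  then have x: "(True, k) \<in> carrier (dihedral m)" and y: "(False, k) \<in> carrier (dihedral m)"
    by (simp_all add: carrier_dihedral)
  have "f ((True, k) \<otimes>\<^bsub>dihedral m\<^esub> (False, k))
      + f ((True, k) \<otimes>\<^bsub>dihedral m\<^esub> inv\<^bsub>dihedral m\<^esub> (False, k)) = f (True, k) + f (True, k)"
    using f x y unfolding S1_def by blast
  moreover have "(True, k) \<otimes>\<^bsub>dihedral m\<^esub> (False, k) = (True, i)"
    using k by simp
  moreover have "(True, k) \<otimes>\<^bsub>dihedral m\<^esub> inv\<^bsub>dihedral m\<^esub> (False, k) = (True, 0)"
    using k m by (simp add: inv_dihedral mod_add_right_eq)
  ultimately have "f (True, i) + f (True, 0) = 0"
    using S1_dihedral_double_eq_zero[OF m f x] by simp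
  moreover have "f (True, 0) + f (True, 0) = 0"
    using S1_dihedral_double_eq_zero[OF m f, of "(True, 0)"] m by (simp add: carrier_dihedral)
  ultimately show ?thesis
    by (metis add_right_cancel)
qed

lemma S1_subset_Hom_add_dihedral:
  assumes "odd m"
  shows "S1 (dihedral m) \<subseteq> Hom_add (dihedral m)"
proof
  fix f :: "bool \<times> int \<Rightarrow> 'h::ab_group_add"
  assume f: "f \<in> S1 (dihedral m)"
  have m: "0 < m"
    using odd_pos[OF assms] .
  define c where "c = f (True, 0)"
  have c_double: "c + c = 0"
    using S1_dihedral_double_eq_zero[OF m f, of "(True, 0)"] m by (simp add: c_def carrier_dihedral)
  have f_eq: "f (a, i) = (if a then c else 0)" if "0 \<le> i" "i < int m" for a i
    using S1_dihedral_rotation[OF assms f that] S1_dihedral_reflection[OF assms f that]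
    by (cases a) (simp_all add: c_def)
  show "f \<in> Hom_add (dihedral m)"
    unfolding Hom_add_def
  proof (intro CollectI ballI)
    fix x y assume "x \<in> carrier (dihedral m)" "y \<in> carrier (dihedral m)"
    then obtain a i b j where xy: "x = (a, i)" "y = (b, j)"
      and ij: "0 \<le> i" "i < int m" "0 \<le> j" "j < int m"
      by (auto simp: carrier_dihedral)
    have "f (x \<otimes>\<^bsub>dihedral m\<^esub> y) = (if a \<noteq> b then c else 0)"
      using m by (simp add: xy f_eq)
    then show "f (x \<otimes>\<^bsub>dihedral m\<^esub> y) = f x + f y"
      using f_eq[OF ij(1,2), of a] f_eq[OF ij(3,4), of b] xy c_double by auto
  qed
qed

lemma rot_4_not_square: "\<not> (\<exists>t\<in>carrier (dihedral 4). t \<otimes>\<^bsub>dihedral 4\<^esub> t = rot 4)"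
proof
  assume "\<exists>t\<in>carrier (dihedral 4). t \<otimes>\<^bsub>dihedral 4\<^esub> t = rot 4"
  then obtain a j where "(a, j) \<otimes>\<^bsub>dihedral 4\<^esub> (a, j) = rot 4"
    by auto
  then have "((if a then - j else j) + j) mod 4 = 1"
    by (simp add: rot_def)
  then show False
    by (cases a) (simp_all, presburger)
qed

theorem mainTheorem8:
  fixes m :: nat
  assumes "m \<ge> 2"
  shows "(odd m \<longrightarrow>
            group (dihedral m) \<and>
            generate (dihedral m) (reflections m) = carrier (dihedral m) \<and>
            (\<forall>a\<in>reflections m. \<forall>b\<in>reflections m. \<exists>t\<in>carrier (dihedral m).
                t \<otimes>\<^bsub>dihedral m\<^esub> t = a \<otimes>\<^bsub>dihedral m\<^esub> b) \<and>
            (S1 (dihedral m) :: (bool \<times> int \<Rightarrow> 'h::ab_group_add) set) = S12 (dihedral m) \<and>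
            (S12 (dihedral m) :: (bool \<times> int \<Rightarrow> 'h) set) = Hom_add (dihedral m))
       \<and> (refl0 \<in> reflections 4 \<and>
          refl0 \<otimes>\<^bsub>dihedral 4\<^esub> rot 4 \<in> reflections 4 \<and>
          refl0 \<otimes>\<^bsub>dihedral 4\<^esub> (refl0 \<otimes>\<^bsub>dihedral 4\<^esub> rot 4) = rot 4 \<and>
          \<not> (\<exists>t\<in>carrier (dihedral 4). t \<otimes>\<^bsub>dihedral 4\<^esub> t = rot 4))"
proof (intro conjI impI)
  assume odd: "odd m"
  have m: "0 < m"
    using assms by simp
  show "group (dihedral m)"
    using group_dihedral[OF m] .
  show "generate (dihedral m) (reflections m) = carrier (dihedral m)"
    using generate_reflections_dihedral[OF m] .
  show "\<forall>a\<in>reflections m. \<forall>b\<in>reflections m. \<exists>t\<in>carrier (dihedral m).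
          t \<otimes>\<^bsub>dihedral m\<^esub> t = a \<otimes>\<^bsub>dihedral m\<^esub> b"
    using reflection_products_are_squares[OF odd] by blast
  have S1_Hom: "(S1 (dihedral m) :: (bool \<times> int \<Rightarrow> 'h) set) \<subseteq> Hom_add (dihedral m)"
    using S1_subset_Hom_add_dihedral[OF odd] .
  have Hom_S12: "(Hom_add (dihedral m) :: (bool \<times> int \<Rightarrow> 'h) set) \<subseteq> S12 (dihedral m)"
    using Hom_add_subset_S12[OF group_dihedral[OF m]] .
  show "(S1 (dihedral m) :: (bool \<times> int \<Rightarrow> 'h) set) = S12 (dihedral m)"
    using S1_Hom Hom_S12 S12_subset_S1 by blast
  show "(S12 (dihedral m) :: (bool \<times> int \<Rightarrow> 'h) set) = Hom_add (dihedral m)"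
    using S1_Hom Hom_S12 S12_subset_S1 by blast
qed (use rot_4_not_square in \<open>simp_all add: reflections_eq refl0_def rot_def\<close>)

end
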